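(* Let $F$ be a Ferrers diagram, $T\in\mathsf{EWtab}(F)$ and $S=S(T)$. If $T_{jk}$ (with $j\in\mathsf{rows}(F)$, $k\in\mathsf{cols}(F)$, $j<k$) is a cornersupport in $T$, then there exist a row $j'\ne j$ and column $k'\ne k$ such that $S_{j'k'}$ induces $T_{jk}$ to be a cornersupport, and either (i) $(j,k),(j,k'),(j',k')$ are cells of $F$ with $T_{jk}=T_{jk'}=0$ and $T_{j'k'}=1$, or (ii) $(j,k),(j',k),(j',k')$ are cells of $F$ with $T_{jk}=T_{j'k}=1$ and $T_{j'k'}=0$.
   Context: Ferrers diagrams and graphs: a Ferrers diagram $F$ (English convention) of semiperimeter $n+1$ has rows and columns labeled by $0,\ldots,n$: the $n+1$ unit steps of its south-east boundary path, traversed from top-right to bottom-left, are labeled $0,\ldots,n$; a vertical step labels the row it bounds, a horizontal step the column it bounds (top row labeled $0$). $\mathsf{rows}(F)$, $\mathsf{cols}(F)$ are the label sets; $F$ has a cell in row $i$, column $j$ iff $i<j$. $G(F)$ has vertex set $\{0,\ldots,n\}$ with edges $\{i,j\}$ for $i\in\mathsf{rows}(F)$, $j\in\mathsf{cols}(F)$, $i<j$. Sandpile model on $G(F)$ with sink $0$: configurations $c\in\mathbb{N}^n$; non-sink $v$ unstable if $c_v\ge\deg(v)$; toppling sends one grain to each neighbour (grains to $0$ disappear); toppling the sink adds one grain to each neighbour of $0$. Canonical toppling of a recurrent configuration $c$: topple the sink ($U^{(0)}_c=\{0\}$), then alternately topple simultaneously all unstable vertices in $\mathsf{cols}(F)$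 ($V^{(1)}_c$), all unstable in $\mathsf{rows}(F)$ ($U^{(1)}_c$), etc.; $\mathsf{CanonTop}(c)=(U^{(0)}_c,V^{(1)}_c,U^{(1)}_c,\ldots)$ is an ordered partition of $\{0,\ldots,n\}$. EW-tableaux: $0/1$-fillings $T$ of $F$ ($T_{ij}$ = entry in row $i$, column $j$) with top row all 1s, a 0 in every other row, and no rectangle with 0s in two diagonally opposite corners and 1s in the other two; $\mathsf{EWtab}(F)$ is their set. $\phi_{TC}(T)$ is the (recurrent) configuration with $c_i$ = number of 1s in row $i$ ($i\in\mathsf{rows}(F)$), $c_i$ = number of 0s in column $i$ ($i\in\mathsf{cols}(F)$). $\mathsf{CanonTop}(T):=\mathsf{CanonTop}(\phi_{TC}(T))$. Supplementary tableau $S=S(T)$: the $|\mathsf{rows}(F)|\times|\mathsf{cols}(F)|$ array with $S_{ij}=1$ if row label $i$ lies in an earlier block of $\mathsf{CanonTop}(T)$ than column label $j$, else $0$ (it agrees with $T$ on cells of $F$). An entry $x$ of $T$ at $(j,k)$ is a cornersupport entry (and the cell a cornersupport) iff there exist a row $j'\ne j$ and column $k'\ne k$ with $S_{j'k'}\ne x$ and $S_{j'k}=S_{jk'}=x$; one says $S_{j'k'}$ induces $T_{jk}$ to be a cornersupport. *)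

theory Defs
  imports Main
begin

text \<open>A Ferrers diagram of semiperimeter n+1 is encoded by its set R of row labels
  (a subset of {0..n}); the column labels are the remaining labels.  The top row is
  labelled 0 and the first column (leftmost, last boundary step) is labelled n.\<close>

definition ferrers :: "nat \<Rightarrow> nat set \<Rightarrow> bool" where
  "ferrers n R \<longleftrightarrow> R \<subseteq> {0..n} \<and> 0 \<in> R \<and> n \<notin> R"

definition rowsF :: "nat \<Rightarrow> nat set \<Rightarrow> nat set" where
  "rowsF n R = R \<inter> {0..n}"

definition colsF :: "nat \<Rightarrow> nat set \<Rightarrow> nat set" where
  "colsF n R = {0..n} - R"

definition cellF :: "nat \<Rightarrow> nat set \<Rightarrow> nat \<Rightarrow> nat \<Rightarrow> bool" where
  "cellF n R i j \<longleftrightarrow> i \<in> rowsF n R \<and> j \<in> colsF n R \<and> i < j"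

definition EWtab :: "nat \<Rightarrow> nat set \<Rightarrow> (nat \<Rightarrow> nat \<Rightarrow> nat) set" where
  "EWtab n R = {T.
     (\<forall>i j. cellF n R i j \<longrightarrow> T i j \<in> {0, 1}) \<and>
     (\<forall>i j. \<not> cellF n R i j \<longrightarrow> T i j = 0) \<and>
     (\<forall>j. cellF n R 0 j \<longrightarrow> T 0 j = 1) \<and>
     (\<forall>i \<in> rowsF n R - {0}. \<exists>j. cellF n R i j \<and> T i j = 0) \<and>
     (\<forall>i1 i2 j1 j2. cellF n R i1 j1 \<and> cellF n R i1 j2 \<and> cellF n R i2 j1 \<and> cellF n R i2 j2
        \<longrightarrow> \<not> (T i1 j1 = 0 \<and> T i2 j2 = 0 \<and> T i1 j2 = 1 \<and> T i2 j1 = 1))}"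

definition adjG :: "nat \<Rightarrow> nat set \<Rightarrow> nat \<Rightarrow> nat \<Rightarrow> bool" where
  "adjG n R u v \<longleftrightarrow> cellF n R u v \<or> cellF n R v u"

definition degG :: "nat \<Rightarrow> nat set \<Rightarrow> nat \<Rightarrow> nat" where
  "degG n R v = card {u \<in> {0..n}. adjG n R u v}"

text \<open>Simultaneous toppling of a set A of non-sink vertices (grains sent to the sink vanish;
  the value at the sink is irrelevant).\<close>
definition toppleSet :: "nat \<Rightarrow> nat set \<Rightarrow> nat set \<Rightarrow> (nat \<Rightarrow> nat) \<Rightarrow> (nat \<Rightarrow> nat)" where
  "toppleSet n R A c = (\<lambda>v. (c v + card {u \<in> A. adjG n R u v}) - (if v \<in> A then degG n R v else 0))"

text \<open>Blocks are thus indexed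
  U0 = 0, V1 = 1, U1 = 2, V2 = 3, ...\<close>
fun canonStep :: "nat \<Rightarrow> nat set \<Rightarrow> (nat \<Rightarrow> nat) \<Rightarrow> nat \<Rightarrow> (nat \<Rightarrow> nat) \<times> nat set" where
  "canonStep n R c 0 = ((\<lambda>v. c v + (if adjG n R 0 v then 1 else 0)), {0})"
| "canonStep n R c (Suc k) =
     (let d = fst (canonStep n R c k);
          A = {v \<in> {1..n}. v \<in> (if even k then colsF n R else rowsF n R) \<and> degG n R v \<le> d v}
      in (toppleSet n R A d, A))"

definition canonBlock :: "nat \<Rightarrow> nat set \<Rightarrow> (nat \<Rightarrow> nat) \<Rightarrow> nat \<Rightarrow> nat set" where
  "canonBlock n R c k = snd (canonStep n R c k)"

definition canonTime :: "nat \<Rightarrow> nat set \<Rightarrow> (nat \<Rightarrow> nat) \<Rightarrow> nat \<Rightarrow> nat" where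
  "canonTime n R c v = (LEAST k. v \<in> canonBlock n R c k)"

definition phiTC :: "nat \<Rightarrow> nat set \<Rightarrow> (nat \<Rightarrow> nat \<Rightarrow> nat) \<Rightarrow> nat \<Rightarrow> nat" where
  "phiTC n R T i = (if i \<in> rowsF n R then card {j. cellF n R i j \<and> T i j = 1}
                    else card {r. cellF n R r i \<and> T r i = 0})"

definition suppTab :: "nat \<Rightarrow> nat set \<Rightarrow> (nat \<Rightarrow> nat \<Rightarrow> nat) \<Rightarrow> nat \<Rightarrow> nat \<Rightarrow> nat" where
  "suppTab n R T i j =
     (if canonTime n R (phiTC n R T) i < canonTime n R (phiTC n R T) j then 1 else 0)"

definition inducesCS :: "nat \<Rightarrow> nat set \<Rightarrow> (nat \<Rightarrow> nat \<Rightarrow> nat) \<Rightarrow> nat \<Rightarrow> nat \<Rightarrow> nat \<Rightarrow> nat \<Rightarrow> bool" where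
  "inducesCS n R T j k j' k' \<longleftrightarrow>
     j' \<in> rowsF n R \<and> k' \<in> colsF n R \<and> j' \<noteq> j \<and> k' \<noteq> k \<and>
     suppTab n R T j' k' \<noteq> T j k \<and> suppTab n R T j' k = T j k \<and> suppTab n R T j k' = T j k"

definition cornersupport :: "nat \<Rightarrow> nat set \<Rightarrow> (nat \<Rightarrow> nat \<Rightarrow> nat) \<Rightarrow> nat \<Rightarrow> nat \<Rightarrow> bool" where
  "cornersupport n R T j k \<longleftrightarrow> cellF n R j k \<and> (\<exists>j' k'. inducesCS n R T j k j' k')"

end

theory Submission
  imports Defs
begin

(* The entries of T orient the edges of G(F): a 1 points from its row to its column, a 0 from
   its column to its row.  Then phiTC T is the out-degree, and canonical toppling topples a
   vertex at the first step of its kind (row or column) after all its in-neighbours have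
   toppled.  The forbidden rectangles make the orientation acyclic, so every vertex topples.
   Writing t(v) for the index of its block, t grows strictly along arcs, is even on rows and
   odd on columns, every non-sink vertex has an in-neighbour u with t(u) + 1 = t(v), and
   S_{ik} = 1 iff t(i) < t(k).
   If S_{j'k'} induces T_{jk} = 0, then t(k) < t(j') < t(k') < t(j); stepping back from j to
   such an in-neighbour k2, and from k2 to such an in-neighbour j2, gives T_{jk2} = 0 and
   T_{j2k2} = 1, and S_{j2k2} induces T_{jk}: this is (i).  If T_{jk} = 1, then
   t(j) < t(k') < t(j') < t(k), and stepping back twice from k gives (ii). *)

lemma pred_closed_finite_set_empty:
  fixes r :: "'a::linorder \<Rightarrow> 'a \<Rightarrow> bool"
  assumes irrefl: "\<And>a. \<not> r a a"
    and shortcut: "\<And>p m x. r p m \<Longrightarrow> r m x \<Longrightarrow> p \<le> m \<Longrightarrow> r p x"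
    and "finite W" and "\<forall>b\<in>W. \<exists>a\<in>W. r a b"
  shows "W = {}"
  using assms(3,4)
  \<comment> \<open>Removing the maximum m keeps the hypothesis: an element whose predecessor was m
    inherits the predecessor of m, by the shortcut property.\<close>
proof (induction W rule: finite_remove_induct)
  case empty
  then show ?case by simp
next
  case (remove W)
  define m where "m = Max W"
  have m: "m \<in> W" "\<And>x. x \<in> W \<Longrightarrow> x \<le> m"
    using remove.hyps(1,2) by (simp_all add: m_def)
  obtain p where p: "p \<in> W" "r p m"
    using remove.prems m(1) by blast
  have "p \<noteq> m" using p(2) irrefl by blast
  have "\<exists>a\<in>W - {m}. r a b" if b: "b \<in> W - {m}" for b
  proof -
    obtain a where a: "a \<in> W" "r a b" using remove.prems b by blast
    show ?thesis
    proof (cases "a = m")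
      case True
      then have "r p b" using shortcut[OF p(2)] a(2) m(2)[OF p(1)] by blast
      then show ?thesis using p(1) \<open>p \<noteq> m\<close> by blast
    qed (use a in blast)
  qed
  then have "W - {m} = {}" using remove.IH[OF m(1)] by blast
  then show ?case using m(1) p \<open>p \<noteq> m\<close> by blast
qed

locale ew_tableau =
  fixes n :: nat and R :: "nat set" and T :: "nat \<Rightarrow> nat \<Rightarrow> nat"
  assumes ferrers: "ferrers n R" and tableau: "T \<in> EWtab n R"
begin

lemma R_subset: "R \<subseteq> {0..n}" and zero_in_R: "0 \<in> R"
  using ferrers by (auto simp: ferrers_def)

lemma rowsF_eq: "rowsF n R = R"
  using R_subset by (auto simp: rowsF_def)

lemma cellF_iff: "cellF n R i j \<longleftrightarrow> i \<in> R \<and> j \<le> n \<and> j \<notin> R \<and> i < j"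
  by (auto simp: cellF_def rowsF_eq colsF_def)

lemma entry_01: "cellF n R i j \<Longrightarrow> T i j = 0 \<or> T i j = 1"
  and top_row_1: "cellF n R 0 j \<Longrightarrow> T 0 j = 1"
  and row_has_0: "i \<in> R \<Longrightarrow> i \<noteq> 0 \<Longrightarrow> \<exists>j. cellF n R i j \<and> T i j = 0"
  and no_rectangle: "cellF n R i1 j1 \<Longrightarrow> cellF n R i1 j2 \<Longrightarrow> cellF n R i2 j1 \<Longrightarrow> cellF n R i2 j2
        \<Longrightarrow> \<not> (T i1 j1 = 0 \<and> T i2 j2 = 0 \<and> T i1 j2 = 1 \<and> T i2 j1 = 1)"
  using tableau by (auto simp: EWtab_def rowsF_eq)

definition arc :: "nat \<Rightarrow> nat \<Rightarrow> bool" where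
  "arc u v \<longleftrightarrow> (cellF n R u v \<and> T u v = 1) \<or> (cellF n R v u \<and> T v u = 0)"

abbreviation preds :: "nat \<Rightarrow> nat set" where "preds v \<equiv> {u. arc u v}"
abbreviation succs :: "nat \<Rightarrow> nat set" where "succs v \<equiv> {w. arc v w}"

lemma adjG_iff_arc: "adjG n R u v \<longleftrightarrow> arc u v \<or> arc v u"
  using entry_01[of u v] entry_01[of v u] unfolding adjG_def arc_def by auto

lemma arc_asym: "arc u v \<Longrightarrow> \<not> arc v u"
  by (auto simp: arc_def cellF_iff)

lemma arc_le: "arc u v \<Longrightarrow> u \<le> n \<and> v \<le> n"
  using R_subset by (auto simp: arc_def cellF_iff)

lemma arc_row_iff_col: "arc u v \<Longrightarrow> u \<in> R \<longleftrightarrow> v \<notin> R"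
  by (auto simp: arc_def cellF_iff)

lemma arc_into_row: "j \<in> R \<Longrightarrow> arc u j \<longleftrightarrow> cellF n R j u \<and> T j u = 0"
  by (auto simp: arc_def cellF_iff)

lemma arc_into_col: "k \<notin> R \<Longrightarrow> arc u k \<longleftrightarrow> cellF n R u k \<and> T u k = 1"
  by (auto simp: arc_def cellF_iff)

lemma no_arc_into_0: "\<not> arc u 0"
proof
  assume "arc u 0"
  then have "cellF n R 0 u" "T 0 u = 0" by (auto simp: arc_def cellF_iff)
  then show False using top_row_1 by simp
qed

lemma finite_preds: "finite (preds v)" and finite_succs: "finite (succs v)"
  by (rule finite_subset[of _ "{0..n}"]; auto dest: arc_le)+

lemma preds_nonempty: "v \<in> {1..n} \<Longrightarrow> preds v \<noteq> {}"
proof (cases "v \<in> R")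
  case True
  assume "v \<in> {1..n}"
  then obtain j where "cellF n R v j" "T v j = 0" using row_has_0 True by force
  then show ?thesis by (auto simp: arc_def)
next
  case False
  assume "v \<in> {1..n}"
  then have "cellF n R 0 v" using False zero_in_R by (auto simp: cellF_iff)
  then show ?thesis using top_row_1 by (auto simp: arc_def)
qed

lemma degG_eq: "degG n R v = card (preds v) + card (succs v)"
proof -
  have "{u \<in> {0..n}. adjG n R u v} = preds v \<union> succs v"
    by (auto simp: adjG_iff_arc dest: arc_le)
  moreover have "preds v \<inter> succs v = {}" using arc_asym by auto
  ultimately show ?thesis
    unfolding degG_def using finite_preds finite_succs by (simp add: card_Un_disjoint)
qed

lemma phiTC_eq: "phiTC n R T v = card (succs v)"
proof (cases "v \<in> R")
  case True
  then have "{j. cellF n R v j \<and> T v j = 1} = succs v" by (auto simp: arc_def cellF_iff)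
  then show ?thesis using True by (simp add: phiTC_def rowsF_eq)
next
  case False
  then have "{r. cellF n R r v \<and> T r v = 0} = succs v" by (auto simp: arc_def cellF_iff)
  then show ?thesis using False by (simp add: phiTC_def rowsF_eq)
qed

definition row_step :: "nat \<Rightarrow> nat \<Rightarrow> bool" where
  "row_step a b \<longleftrightarrow> a \<in> R \<and> (\<exists>c. arc a c \<and> arc c b)"

lemma row_step_irrefl: "\<not> row_step a a"
  by (auto simp: row_step_def arc_def cellF_iff)

lemma row_step_shortcut:
  assumes "row_step p m" "row_step m x" "p \<le> m"
  shows "row_step p x"
proof -
  obtain c where c: "arc p c" "arc c m" "p \<in> R" using assms(1) by (auto simp: row_step_def)
  obtain d where d: "arc m d" "arc d x" "m \<in> R" using assms(2) by (auto simp: row_step_def)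
  have pc: "cellF n R p c" "T p c = 1" and mc: "cellF n R m c" "T m c = 0"
    and md: "cellF n R m d" "T m d = 1"
    using c d by (auto simp: arc_def cellF_iff)
  have pd: "cellF n R p d" using md(1) c(3) assms(3) by (auto simp: cellF_iff)
  have "T p d = 1" using entry_01[OF pd] no_rectangle[OF pd pc(1) md(1) mc(1)] pc mc md by auto
  then have "arc p d" using pd by (auto simp: arc_def)
  then show ?thesis using c(3) d(2) by (auto simp: row_step_def)
qed

lemma finite_set_has_source:
  assumes "finite U" "U \<noteq> {}"
  shows "\<exists>v\<in>U. preds v \<inter> U = {}"
proof (rule ccontr)
  assume "\<not> ?thesis"
  then have closed: "\<exists>u\<in>U. arc u v" if "v \<in> U" for v using that by blast
  have "\<exists>a\<in>U \<inter> R. row_step a b" if b: "b \<in> U \<inter> R" for b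
  proof -
    obtain c where c: "c \<in> U" "arc c b" using closed b by blast
    obtain a where a: "a \<in> U" "arc a c" using closed c(1) by blast
    have "a \<in> R" using b arc_row_iff_col[OF c(2)] arc_row_iff_col[OF a(2)] by blast
    then show ?thesis using a c by (auto simp: row_step_def)
  qed
  then have "U \<inter> R = {}"
    using pred_closed_finite_set_empty[of row_step "U \<inter> R"] row_step_irrefl row_step_shortcut
      assms(1) by blast
  moreover obtain v where "v \<in> U" using assms(2) by blast
  ultimately show False using closed arc_row_iff_col by blast
qed

definition conf :: "nat \<Rightarrow> nat \<Rightarrow> nat" where
  "conf k = fst (canonStep n R (phiTC n R T) k)"

definition block :: "nat \<Rightarrow> nat set" where
  "block k = canonBlock n R (phiTC n R T) k"

definition toppled :: "nat \<Rightarrow> nat set" where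
  "toppled k = (\<Union>m\<le>k. block m)"

abbreviation time :: "nat \<Rightarrow> nat" where
  "time v \<equiv> canonTime n R (phiTC n R T) v"

lemma block_0: "block 0 = {0}"
  by (simp add: block_def canonBlock_def)

lemma conf_0: "conf 0 v = card (succs v) + (if arc 0 v then 1 else 0)"
  by (simp add: conf_def phiTC_eq adjG_iff_arc no_arc_into_0)

lemma block_Suc_unstable:
  "block (Suc k) = {v \<in> {1..n}. (v \<in> R \<longleftrightarrow> odd k) \<and> degG n R v \<le> conf k v}"
  using R_subset by (auto simp: block_def canonBlock_def conf_def Let_def colsF_def rowsF_eq)

lemma conf_Suc:
  "conf (Suc k) v = conf k v + card (preds v \<inter> block (Suc k)) + card (succs v \<inter> block (Suc k))
     - (if v \<in> block (Suc k) then degG n R v else 0)"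
proof -
  have "{u \<in> block (Suc k). adjG n R u v} = (preds v \<inter> block (Suc k)) \<union> (succs v \<inter> block (Suc k))"
    by (auto simp: adjG_iff_arc)
  moreover have "(preds v \<inter> block (Suc k)) \<inter> (succs v \<inter> block (Suc k)) = {}"
    using arc_asym by auto
  ultimately have "card {u \<in> block (Suc k). adjG n R u v}
      = card (preds v \<inter> block (Suc k)) + card (succs v \<inter> block (Suc k))"
    using finite_preds finite_succs by (simp add: card_Un_disjoint)
  then show ?thesis
    by (simp add: conf_def block_def canonBlock_def Let_def toppleSet_def)
qed

lemma toppled_0: "toppled 0 = {0}"
  by (simp add: toppled_def block_0)

lemma toppled_Suc: "toppled (Suc k) = toppled k \<union> block (Suc k)"
  by (simp add: toppled_def atMost_Suc Un_commute)

lemma toppled_mono: "k \<le> m \<Longrightarrow> toppled k \<subseteq> toppled m"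
  unfolding toppled_def by (intro UN_mono) auto

lemma toppled_subset: "toppled k \<subseteq> {0..n}"
  by (induction k) (auto simp: toppled_0 toppled_Suc block_Suc_unstable)

definition toppled_conf :: "nat set \<Rightarrow> nat \<Rightarrow> nat" where
  "toppled_conf X v =
     (if v \<in> X then card (succs v \<inter> X) else card (succs v) + card (preds v \<inter> X))"

lemma toppled_conf_Un:
  assumes closed: "\<forall>x\<in>X. preds x \<subseteq> X" and new: "\<forall>a\<in>A. preds a \<subseteq> X"
    and disj: "X \<inter> A = {}"
  shows "toppled_conf X v + card (preds v \<inter> A) + card (succs v \<inter> A)
           - (if v \<in> A then degG n R v else 0) = toppled_conf (X \<union> A) v"
proof -
  have card_split: "card (Y \<inter> (X \<union> A)) = card (Y \<inter> X) + card (Y \<inter> A)" if "finite Y" for Y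
    using that disj by (simp add: Int_Un_distrib card_Un_disjoint disjoint_iff)
  consider "v \<in> X" | "v \<in> A" | "v \<notin> X \<union> A" by blast
  then show ?thesis
  proof cases
    case 1
    then have "preds v \<inter> A = {}" "v \<notin> A" using closed disj by auto
    then show ?thesis using 1 card_split[OF finite_succs] by (simp add: toppled_conf_def)
  next
    case 2
    then have "v \<notin> X" "preds v \<subseteq> X" using new disj by blast+
    then have "preds v \<inter> A = {}" "preds v \<inter> X = preds v"
        "succs v \<inter> X = {}" "succs v \<inter> A = {}"
      using closed new disj by blast+
    then show ?thesis using 2 by (simp add: toppled_conf_def degG_eq Int_Un_distrib)
  next
    case 3
    then have "succs v \<inter> A = {}" using new by auto
    then show ?thesis using 3 card_split[OF finite_preds] by (simp add: toppled_conf_def)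
  qed
qed

definition toppling_inv :: "nat \<Rightarrow> bool" where
  "toppling_inv k \<longleftrightarrow> (\<forall>v\<in>toppled k. preds v \<subseteq> toppled k) \<and>
     (\<forall>v\<in>{1..n}. conf k v = toppled_conf (toppled k) v)"

lemma unstable_iff:
  assumes inv: "toppling_inv k" and v: "v \<in> {1..n}"
  shows "degG n R v \<le> conf k v \<longleftrightarrow> v \<notin> toppled k \<and> preds v \<subseteq> toppled k"
proof (cases "v \<in> toppled k")
  case True
  have "card (succs v \<inter> toppled k) \<le> card (succs v)"
    by (rule card_mono[OF finite_succs]) blast
  moreover have "card (preds v) > 0"
    using preds_nonempty[OF v] finite_preds by (simp add: card_gt_0_iff)
  ultimately show ?thesis using inv v True by (simp add: toppling_inv_def toppled_conf_def degG_eq)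
next
  case False
  have "card (preds v) \<le> card (preds v \<inter> toppled k) \<longleftrightarrow> preds v \<subseteq> toppled k"
    using card_seteq[OF finite_preds, of "preds v \<inter> toppled k"] by (auto simp: Int_absorb2)
  then show ?thesis using inv v False by (simp add: toppling_inv_def toppled_conf_def degG_eq)
qed

lemma toppling_inv_Suc:
  assumes inv: "toppling_inv k"
  shows "toppling_inv (Suc k)"
proof -
  have closed: "\<forall>v\<in>toppled k. preds v \<subseteq> toppled k"
    and conf_k: "\<forall>v\<in>{1..n}. conf k v = toppled_conf (toppled k) v"
    using inv by (simp_all add: toppling_inv_def)
  have A: "block (Suc k) = {v \<in> {1..n}. (v \<in> R \<longleftrightarrow> odd k) \<and> v \<notin> toppled k \<and> preds v \<subseteq> toppled k}"
    using block_Suc_unstable unstable_iff[OF inv] by auto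
  then have new: "\<forall>a\<in>block (Suc k). preds a \<subseteq> toppled k"
    and disj: "toppled k \<inter> block (Suc k) = {}" by auto
  have "\<forall>v\<in>{1..n}. conf (Suc k) v = toppled_conf (toppled (Suc k)) v"
    using conf_k conf_Suc toppled_conf_Un[OF closed new disj] by (simp add: toppled_Suc)
  moreover have "\<forall>v\<in>toppled (Suc k). preds v \<subseteq> toppled (Suc k)"
    using closed new by (auto simp: toppled_Suc)
  ultimately show ?thesis by (simp add: toppling_inv_def)
qed

lemma toppling_inv: "toppling_inv k"
proof (induction k)
  case 0
  have "card (preds v \<inter> {0}) = (if arc 0 v then 1 else 0)" for v
    by (simp add: Int_def Collect_conv_if)
  then show ?case by (auto simp: toppling_inv_def toppled_conf_def toppled_0 conf_0 no_arc_into_0)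
next
  case (Suc k)
  then show ?case by (rule toppling_inv_Suc)
qed

lemma block_Suc:
  "block (Suc k) = {v \<in> {1..n}. (v \<in> R \<longleftrightarrow> odd k) \<and> v \<notin> toppled k \<and> preds v \<subseteq> toppled k}"
  using block_Suc_unstable unstable_iff[OF toppling_inv] by auto

lemma toppled_grows:
  assumes "toppled k \<noteq> {0..n}"
  shows "card (toppled k) < card (toppled (Suc (Suc k)))"
proof -
  let ?U = "{0..n} - toppled k"
  have "?U \<noteq> {}" using assms toppled_subset by blast
  then obtain v where v: "v \<in> ?U" "preds v \<inter> ?U = {}"
    using finite_set_has_source[of ?U] by (meson finite_Diff finite_atLeastAtMost)
  have preds_v: "preds v \<subseteq> toppled k"
  proof
    fix u assume "u \<in> preds v"
    then show "u \<in> toppled k" using v(2) arc_le[of u v] by auto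
  qed
  have "0 \<in> toppled k" using toppled_mono[of 0 k] by (auto simp: toppled_0)
  then have "v \<noteq> 0" using v(1) by (metis DiffD2)
  then have v_range: "v \<in> {1..n}" using v(1) by simp
  have mono: "toppled k \<subseteq> toppled (Suc k)" "toppled (Suc k) \<subseteq> toppled (Suc (Suc k))"
    by (simp_all add: toppled_mono)
  have "v \<in> toppled (Suc (Suc k))"
  proof (cases "v \<in> toppled (Suc k)")
    case True
    then show ?thesis using mono by blast
  next
    case False
    then have "v \<in> block (Suc k) \<or> v \<in> block (Suc (Suc k))"
      unfolding block_Suc using v_range v(1) preds_v mono by auto
    then show ?thesis by (auto simp: toppled_Suc)
  qed
  then have "toppled k \<subset> toppled (Suc (Suc k))"
    using v(1) mono by blast
  moreover have "finite (toppled (Suc (Suc k)))"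
    using toppled_subset finite_subset by blast
  ultimately show ?thesis by (rule psubset_card_mono[rotated])
qed

lemma toppled_2n: "toppled (2 * n) = {0..n}"
proof -
  have "toppled (2 * m) = {0..n} \<or> m < card (toppled (2 * m))" for m
  proof (induction m)
    case 0
    then show ?case by (simp add: toppled_0)
  next
    case (Suc m)
    show ?case
    proof (cases "toppled (2 * m) = {0..n}")
      case True
      then have "toppled (2 * Suc m) = {0..n}"
        using toppled_mono[of "2 * m" "2 * Suc m"] toppled_subset by auto
      then show ?thesis ..
    next
      case False
      then show ?thesis using Suc.IH toppled_grows[of "2 * m"] by simp
    qed
  qed
  then show ?thesis
    using card_seteq[OF finite_atLeastAtMost toppled_subset[of "2 * n"]] by fastforce
qed

lemma block_unique: "v \<in> block m \<Longrightarrow> v \<in> block m' \<Longrightarrow> m = m'"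
proof -
  have "v \<notin> block m" if "m' < m" "v \<in> block m'" for m m'
  proof -
    obtain k where k: "m = Suc k" "m' \<le> k" using \<open>m' < m\<close> by (cases m) auto
    then have "v \<in> toppled k" using that(2) by (auto simp: toppled_def)
    then show ?thesis using k(1) by (simp add: block_Suc)
  qed
  then show "v \<in> block m \<Longrightarrow> v \<in> block m' \<Longrightarrow> m = m'" by (meson linorder_neqE_nat)
qed

lemma time_eqI: "v \<in> block m \<Longrightarrow> time v = m"
  unfolding canonTime_def block_def[symmetric]
  by (rule Least_equality) (auto dest: block_unique)

lemma in_block_time: "v \<le> n \<Longrightarrow> v \<in> block (time v)"
  using toppled_2n time_eqI by (force simp: toppled_def)

lemma in_toppled_iff: "v \<in> toppled m \<longleftrightarrow> v \<le> n \<and> time v \<le> m"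
proof
  assume v: "v \<in> toppled m"
  then obtain m' where "m' \<le> m" "v \<in> block m'" by (auto simp: toppled_def)
  moreover have "v \<le> n" using v toppled_subset[of m] by auto
  ultimately show "v \<le> n \<and> time v \<le> m" using time_eqI by auto
next
  assume "v \<le> n \<and> time v \<le> m"
  then show "v \<in> toppled m" using in_block_time by (auto simp: toppled_def)
qed

lemma time_0: "time 0 = 0"
  by (rule time_eqI) (simp add: block_0)

lemma time_eq_0_iff: "v \<le> n \<Longrightarrow> time v = 0 \<longleftrightarrow> v = 0"
  using in_block_time[of v] time_0 by (auto simp: block_0)

lemma even_time_iff: "v \<le> n \<Longrightarrow> even (time v) \<longleftrightarrow> v \<in> R"
  using in_block_time[of v] zero_in_R by (cases "time v") (auto simp: block_0 block_Suc)

lemma arc_time_less: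
  assumes "arc u v"
  shows "time u < time v"
proof -
  have v: "v \<le> n" "v \<noteq> 0" using arc_le[OF assms] no_arc_into_0[of u] assms by metis+
  then obtain k where k: "time v = Suc k" using time_eq_0_iff by (cases "time v") auto
  then have "u \<in> toppled k" using in_block_time[OF v(1)] assms by (auto simp: block_Suc)
  then show ?thesis using k by (simp add: in_toppled_iff)
qed

lemma arc_time_parity: "arc u v \<Longrightarrow> even (time u) \<longleftrightarrow> odd (time v)"
  using arc_le arc_row_iff_col even_time_iff by blast

lemma pred_one_step_before:
  assumes v: "v \<in> {1..n}"
  shows "\<exists>u. arc u v \<and> Suc (time u) = time v"
proof (rule ccontr)
  assume none: "\<not> ?thesis"
  have early: "time u + 3 \<le> time v" if u: "arc u v" for u
  proof -
    have "time v \<noteq> time u + 2" using arc_time_parity[OF u] by auto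
    moreover have "time u < time v" "Suc (time u) \<noteq> time v"
      using arc_time_less[OF u] none u by blast+
    ultimately show ?thesis by linarith
  qed
  obtain u where "arc u v" using preds_nonempty[OF v] by blast
  define k where "k = time v - 3"
  have k: "time v = k + 3" using early[OF \<open>arc u v\<close>] by (simp add: k_def)
  have "v \<in> block (Suc k)"
    using v k early arc_le even_time_iff[of v] by (auto simp: block_Suc in_toppled_iff)
  then show False using time_eqI k by simp
qed

lemma time_row_neq_col: "i \<in> R \<Longrightarrow> c \<le> n \<Longrightarrow> c \<notin> R \<Longrightarrow> time i \<noteq> time c"
  using R_subset even_time_iff by (metis atLeastAtMost_iff subsetD)

lemma suppTab_eq_1_iff: "suppTab n R T i c = 1 \<longleftrightarrow> time i < time c"
  and suppTab_eq_0_iff: "suppTab n R T i c = 0 \<longleftrightarrow> \<not> time i < time c"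
  by (simp_all add: suppTab_def)

lemma cornersupport_0_witness:
  assumes jk: "cellF n R j k" "T j k = 0" and ind: "inducesCS n R T j k j' k'"
  shows "\<exists>j2 k2. inducesCS n R T j k j2 k2 \<and> cellF n R j k2 \<and> cellF n R j2 k2 \<and>
           T j k2 = 0 \<and> T j2 k2 = 1"
proof -
  have j: "j \<in> R" "j \<le> n" and k: "k \<le> n" "k \<notin> R" and j': "j' \<in> R" and k': "k' \<le> n" "k' \<notin> R"
    using jk(1) ind R_subset by (auto simp: cellF_iff inducesCS_def rowsF_eq colsF_def)
  have "suppTab n R T j' k' \<noteq> 0" "suppTab n R T j' k = 0" "suppTab n R T j k' = 0"
    using ind jk(2) by (simp_all add: inducesCS_def)
  then have "time j' < time k'" "\<not> time j' < time k" "\<not> time j < time k'"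
    by (simp_all only: suppTab_eq_1_iff suppTab_eq_0_iff simp_thms)
  then have order: "time k < time j'" "time j' < time k'" "time k' < time j"
    using time_row_neq_col[OF j' k] time_row_neq_col[OF j(1) k'] by simp_all
  then have "j \<in> {1..n}" using j(2) time_eq_0_iff[OF j(2)] by auto
  then obtain k2 where k2: "arc k2 j" "Suc (time k2) = time j"
    using pred_one_step_before by blast
  have jk2: "cellF n R j k2" "T j k2 = 0" using k2(1) j(1) arc_into_row by blast+
  then have k2_col: "k2 \<le> n" "k2 \<notin> R" by (auto simp: cellF_iff)
  have "k2 \<in> {1..n}" using k2(2) order k2_col(1) time_eq_0_iff[of k2] by auto
  then obtain j2 where j2: "arc j2 k2" "Suc (time j2) = time k2"
    using pred_one_step_before by blast
  have j2k2: "cellF n R j2 k2" "T j2 k2 = 1" using j2(1) k2_col(2) arc_into_col by blast+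
  have "j2 \<noteq> j" "k2 \<noteq> k" using k2(2) j2(2) order by auto
  then have "inducesCS n R T j k j2 k2"
    using j2k2(1) k2(2) j2(2) order jk(2)
    by (auto simp: inducesCS_def cellF_def suppTab_def)
  then show ?thesis using jk2 j2k2 by blast
qed

lemma cornersupport_1_witness:
  assumes jk: "cellF n R j k" "T j k = 1" and ind: "inducesCS n R T j k j' k'"
  shows "\<exists>j2 k2. inducesCS n R T j k j2 k2 \<and> cellF n R j2 k \<and> cellF n R j2 k2 \<and>
           T j2 k = 1 \<and> T j2 k2 = 0"
proof -
  have k: "k \<le> n" "k \<notin> R" and j': "j' \<in> R" and k': "k' \<le> n" "k' \<notin> R"
    using jk(1) ind by (auto simp: cellF_iff inducesCS_def rowsF_eq colsF_def)
  have "suppTab n R T j' k' \<noteq> 1" "suppTab n R T j' k = 1" "suppTab n R T j k' = 1"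
    using ind jk(2) by (simp_all add: inducesCS_def)
  then have "\<not> time j' < time k'" "time j' < time k" "time j < time k'"
    by (simp_all only: suppTab_eq_1_iff suppTab_eq_0_iff simp_thms)
  then have order: "time j < time k'" "time k' < time j'" "time j' < time k"
    using time_row_neq_col[OF j' k'] by simp_all
  then have "k \<in> {1..n}" using k time_eq_0_iff[OF k(1)] by auto
  then obtain j2 where j2: "arc j2 k" "Suc (time j2) = time k"
    using pred_one_step_before by blast
  have j2k: "cellF n R j2 k" "T j2 k = 1" using j2(1) k(2) arc_into_col by blast+
  then have j2_row: "j2 \<in> R" "j2 \<le> n" using R_subset by (auto simp: cellF_iff)
  have "j2 \<in> {1..n}" using j2(2) order j2_row(2) time_eq_0_iff[of j2] by auto
  then obtain k2 where k2: "arc k2 j2" "Suc (time k2) = time j2"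
    using pred_one_step_before by blast
  have j2k2: "cellF n R j2 k2" "T j2 k2 = 0" using k2(1) j2_row(1) arc_into_row by blast+
  have "j2 \<noteq> j" "k2 \<noteq> k" using k2(2) j2(2) order by auto
  then have "inducesCS n R T j k j2 k2"
    using j2k2(1) k2(2) j2(2) order jk(2)
    by (auto simp: inducesCS_def cellF_def suppTab_def)
  then show ?thesis using j2k j2k2 by blast
qed

end

theorem lemma4p17:
  fixes n :: nat and R :: "nat set" and T :: "nat \<Rightarrow> nat \<Rightarrow> nat" and j k :: nat
  assumes "ferrers n R"
    and "T \<in> EWtab n R"
    and "cornersupport n R T j k"
  shows "\<exists>j' k'. inducesCS n R T j k j' k' \<and>
           ((cellF n R j k \<and> cellF n R j k' \<and> cellF n R j' k' \<and>
              T j k = 0 \<and> T j k' = 0 \<and> T j' k' = 1) \<or>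
            (cellF n R j k \<and> cellF n R j' k \<and> cellF n R j' k' \<and>
              T j k = 1 \<and> T j' k = 1 \<and> T j' k' = 0))"
proof -
  interpret ew_tableau n R T using assms(1,2) by unfold_locales
  obtain j' k' where jk: "cellF n R j k" and ind: "inducesCS n R T j k j' k'"
    using assms(3) by (auto simp: cornersupport_def)
  consider "T j k = 0" | "T j k = 1" using entry_01[OF jk] by auto
  then show ?thesis
  proof cases
    case 1
    then show ?thesis using cornersupport_0_witness[OF jk 1 ind] jk by blast
  next
    case 2
    then show ?thesis using cornersupport_1_witness[OF jk 2 ind] jk by blast
  qed
qed

end
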